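(* Let $k$ be an infinite field of characteristic $p>0$. Then for every positive integer $n$, $R_n^{(p)}\subseteq L_n$.
   Context: $X=\{x_1,x_2,\ldots\}$ is a countably infinite set and $k_0\langle X\rangle$ is the free associative $k$-algebra (without identity) on $X$. A $T$-space is a $k$-linear subspace closed under every algebra endomorphism of $k_0\langle X\rangle$; the $T$-space generated by a subset is the smallest $T$-space containing it. $S_p(v_1,\ldots,v_p)=\sum_{\sigma\in\Sigma_p}\prod_{i=1}^p v_{\sigma(i)}$. $R_1^{(p)}$ is the $T$-space generated by $S_p(x_1,\ldots,x_p)$, and $R_{n+1}^{(p)}$ is the $T$-space generated by $R_n^{(p)}$ together with all products $u\,S_p(v_1,\ldots,v_p)$, $u\in R_n^{(p)}$, $v_i\in k_0\langle X\rangle$. $L_1$ is the $T$-space generated by $x_1^p$, and $L_{n+1}$ is the $T$-space generated by $L_n$ together with all products $u\,v^p$, $u\in L_n$, $v\in k_0\langle X\rangle$. *)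

theory Defs
  imports Main "HOL-Combinatorics.Permutations"
begin

text \<open>Free associative k-algebra without identity on X = {x_0, x_1, ...} (indexed by nat):
  elements are finitely supported coefficient functions on words (nat lists) with zero
  coefficient on the empty word.\<close>

type_synonym 'k fa = "nat list \<Rightarrow> 'k"

definition FA :: "'k::field fa set" where
  "FA = {f. finite {w. f w \<noteq> 0} \<and> f [] = 0}"

definition fzero :: "'k::field fa" where "fzero = (\<lambda>w. 0)"
definition fadd :: "'k::field fa \<Rightarrow> 'k fa \<Rightarrow> 'k fa" where "fadd f g = (\<lambda>w. f w + g w)"
definition fsc :: "'k::field \<Rightarrow> 'k fa \<Rightarrow> 'k fa" where "fsc c f = (\<lambda>w. c * f w)"
definition fsum :: "('i \<Rightarrow> 'k::field fa) \<Rightarrow> 'i set \<Rightarrow> 'k fa" where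
  "fsum F I = (\<lambda>w. \<Sum>i\<in>I. F i w)"

definition fmul :: "'k::field fa \<Rightarrow> 'k fa \<Rightarrow> 'k fa" where
  "fmul f g = (\<lambda>w. \<Sum>i\<le>length w. f (take i w) * g (drop i w))"

text \<open>Formal unit (only used as the neutral start of products of nonempty lists).\<close>
definition fone :: "'k::field fa" where "fone = (\<lambda>w. if w = [] then 1 else 0)"

definition fprod :: "'k::field fa list \<Rightarrow> 'k fa" where
  "fprod vs = foldr fmul vs fone"

definition fpow :: "'k::field fa \<Rightarrow> nat \<Rightarrow> 'k fa" where
  "fpow v n = fprod (replicate n v)"

definition var :: "nat \<Rightarrow> 'k::field fa" where
  "var i = (\<lambda>w. if w = [i] then 1 else 0)"

definition alg_endo :: "('k::field fa \<Rightarrow> 'k fa) \<Rightarrow> bool" where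
  "alg_endo h \<longleftrightarrow> (\<forall>f\<in>FA. h f \<in> FA) \<and>
     (\<forall>f\<in>FA. \<forall>g\<in>FA. h (fadd f g) = fadd (h f) (h g) \<and> h (fmul f g) = fmul (h f) (h g)) \<and>
     (\<forall>c. \<forall>f\<in>FA. h (fsc c f) = fsc c (h f))"

definition tspace :: "'k::field fa set \<Rightarrow> bool" where
  "tspace T \<longleftrightarrow> T \<subseteq> FA \<and> fzero \<in> T \<and> (\<forall>a\<in>T. \<forall>b\<in>T. fadd a b \<in> T) \<and>
     (\<forall>c. \<forall>a\<in>T. fsc c a \<in> T) \<and> (\<forall>h. alg_endo h \<longrightarrow> (\<forall>a\<in>T. h a \<in> T))"

definition tgen :: "'k::field fa set \<Rightarrow> 'k fa set" where
  "tgen S = \<Inter>{T. tspace T \<and> S \<subseteq> T}"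

definition Sp :: "nat \<Rightarrow> (nat \<Rightarrow> 'k::field fa) \<Rightarrow> 'k fa" where
  "Sp p v = fsum (\<lambda>\<sigma>. fprod (map (\<lambda>i. v (\<sigma> i)) [0..<p])) {\<sigma>. \<sigma> permutes {0..<p}}"

text \<open>R_n^(p) and L_n, indexed from n = 1 (value at 0 is irrelevant).
  x_1,...,x_p are represented by var 1, ..., var p.\<close>
fun Rsp :: "nat \<Rightarrow> nat \<Rightarrow> 'k::field fa set" where
  "Rsp p 0 = {}"
| "Rsp p (Suc 0) = tgen {Sp p (\<lambda>i. var (Suc i))}"
| "Rsp p (Suc (Suc n)) = tgen (Rsp p (Suc n) \<union>
     {fmul u (Sp p v) | u v. u \<in> Rsp p (Suc n) \<and> (\<forall>i<p. v i \<in> FA)})"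

fun Lsp :: "nat \<Rightarrow> nat \<Rightarrow> 'k::field fa set" where
  "Lsp p 0 = {}"
| "Lsp p (Suc 0) = tgen {fpow (var 1) p}"
| "Lsp p (Suc (Suc n)) = tgen (Lsp p (Suc n) \<union>
     {fmul u (fpow v p) | u v. u \<in> Lsp p (Suc n) \<and> v \<in> FA})"

end

theory Submission imports Defs begin

text \<open>Polarization: inclusion-exclusion over the set of letters a word uses gives
  \<open>S_p(v_1, ..., v_p) = \<Sum>_J (-1)^(p - |J|) (\<Sum>_{j \<in> J} v_j)^p\<close>, with \<open>J\<close> ranging over
  the subsets of \<open>{1, ..., p}\<close>. Each \<open>(\<Sum>_{j \<in> J} x_j)^p\<close> is the image of \<open>x_1^p\<close> under an
  endomorphism, so \<open>S_p(x_1, ..., x_p) \<in> L_1\<close>; and \<open>u S_p(v_1, ..., v_p)\<close> is a linear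
  combination of products \<open>u w^p\<close>, which gives the inductive step \<open>R_{n+1} \<subseteq> L_{n+1}\<close>.
  The identity holds over every field, so neither the characteristic nor the size of \<open>k\<close>
  plays a role.\<close>

lemma fsum_apply: "fsum F I w = (\<Sum>i\<in>I. F i w)"
  by (simp add: fsum_def)

lemma fmul_fsum_right: "fmul f (fsum G K) = fsum (\<lambda>b. fmul f (G b)) K"
  unfolding fmul_def fsum_def by (rule ext) (simp add: sum_distrib_left sum.swap[of _ K])

lemma fmul_fsum_left: "fmul (fsum F K) g = fsum (\<lambda>b. fmul (F b) g) K"
  unfolding fmul_def fsum_def by (rule ext) (simp add: sum_distrib_right sum.swap[of _ K])

lemma fmul_fsc_right: "fmul f (fsc c g) = fsc c (fmul f g)"
  unfolding fmul_def fsc_def by (rule ext) (simp add: sum_distrib_left mult_ac)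

lemma fprod_Cons: "fprod (x # xs) = fmul x (fprod xs)"
  by (simp add: fprod_def)

lemma fpow_0: "fpow v 0 = fone"
  by (simp add: fpow_def fprod_def)

lemma fpow_Suc: "fpow v (Suc n) = fmul v (fpow v n)"
  by (simp add: fpow_def fprod_def)

lemma fpow_fsum:
  assumes "finite J"
  shows "fpow (fsum v J) n = fsum (\<lambda>ws. fprod (map v ws)) {ws. set ws \<subseteq> J \<and> length ws = n}"
proof (induction n)
  case 0
  have "{ws. set ws \<subseteq> J \<and> length ws = 0} = {[]}" by auto
  then show ?case by (simp add: fpow_0 fsum_def fprod_def)
next
  case (Suc n)
  let ?W = "{ws. set ws \<subseteq> J \<and> length ws = n}"
  have "fpow (fsum v J) (Suc n) = fsum (\<lambda>ws. fsum (\<lambda>j. fprod (map v (j # ws))) J) ?W"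
    by (simp add: fpow_Suc Suc.IH fmul_fsum_left fmul_fsum_right fprod_Cons)
  also have "\<dots> = fsum (\<lambda>(ws, j). fprod (map v (j # ws))) (?W \<times> J)"
    unfolding fsum_def by (simp add: sum.cartesian_product split_def)
  also have "\<dots> = fsum (\<lambda>ws. fprod (map v ws)) ((\<lambda>(ws, j). j # ws) ` (?W \<times> J))"
    unfolding fsum_def sum.reindex[OF inj_split_Cons] by (simp add: split_def)
  finally show ?case by (simp only: lists_length_Suc_eq)
qed

section \<open>Polarization of \<open>S_p\<close>\<close>

lemma permutes_of_word:
  assumes ws: "set ws = {0..<n}" and len: "length ws = n"
  shows "(\<lambda>k. if k < n then ws ! k else k) permutes {0..<n}"
proof -
  have "distinct ws"
    by (rule card_distinct) (simp add: ws len)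
  then have "bij_betw ((!) ws) {0..<n} {0..<n}"
    by (rule bij_betw_nth) (auto simp: ws len)
  then have "bij_betw (\<lambda>k. if k < n then ws ! k else k) {0..<n} {0..<n}"
    by (rule bij_betw_cong[THEN iffD1, rotated]) auto
  then show ?thesis
    by (rule bij_imp_permutes) auto
qed

lemma bij_betw_permutes_words:
  "bij_betw (\<lambda>\<sigma>. map \<sigma> [0..<n]) {\<sigma>. \<sigma> permutes {0..<n}} {ws. set ws = {0..<n} \<and> length ws = n}"
proof (rule bij_betw_byWitness[where f' = "\<lambda>ws k. if k < n then ws ! k else k"])
  show "\<forall>\<sigma>\<in>{\<sigma>. \<sigma> permutes {0..<n}}. (\<lambda>k. if k < n then map \<sigma> [0..<n] ! k else k) = \<sigma>"
    by (auto simp: fun_eq_iff permutes_not_in[of _ "{0..<n}"])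
  show "\<forall>ws\<in>{ws. set ws = {0..<n} \<and> length ws = n}. map (\<lambda>k. if k < n then ws ! k else k) [0..<n] = ws"
    by (simp add: list_eq_iff_nth_eq)
  show "(\<lambda>\<sigma>. map \<sigma> [0..<n]) ` {\<sigma>. \<sigma> permutes {0..<n}} \<subseteq> {ws. set ws = {0..<n} \<and> length ws = n}"
    by (auto simp: permutes_image)
  show "(\<lambda>ws k. if k < n then ws ! k else k) ` {ws. set ws = {0..<n} \<and> length ws = n}
      \<subseteq> {\<sigma>. \<sigma> permutes {0..<n}}"
    by (auto intro: permutes_of_word)
qed

lemma Sp_eq_fsum_words:
  "Sp p v = fsum (\<lambda>ws. fprod (map v ws)) {ws. set ws = {0..<p} \<and> length ws = p}"
  unfolding Sp_def fsum_def
  by (rule ext, subst sum.reindex_bij_betw[OF bij_betw_permutes_words, symmetric]) (simp add: comp_def)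

lemma Sp_polarization:
  "Sp p v = fsum (\<lambda>J. fsc ((-1) ^ (p - card J)) (fpow (fsum v J) p)) (Pow {0..<p})"
proof (rule ext)
  fix u
  define c where "c ws = fprod (map v ws) u" for ws
  define f where "f T = (\<Sum>ws\<in>{ws. set ws = T \<and> length ws = p}. c ws)" for T :: "nat set"
  define g where "g S = (\<Sum>ws\<in>{ws. set ws \<subseteq> S \<and> length ws = p}. c ws)" for S :: "nat set"
  have g_eq: "g S = sum f (Pow S)" if "finite S" for S
  proof -
    have "sum f (Pow S) = (\<Sum>T\<in>Pow S. \<Sum>ws\<in>{ws \<in> {ws. set ws \<subseteq> S \<and> length ws = p}. set ws = T}. c ws)"
      unfolding f_def by (intro sum.cong refl arg_cong[where f="\<lambda>A. sum c A"]) auto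
    also have "\<dots> = g S" unfolding g_def
      by (rule sum.group) (use that finite_lists_length_eq[OF that] in auto)
    finally show ?thesis by simp
  qed
  have "Sp p v u = f {0..<p}"
    unfolding Sp_eq_fsum_words f_def c_def by (simp add: fsum_def)
  also have "\<dots> = (\<Sum>T\<in>Pow {0..<p}. (-1) ^ (card {0..<p} - card T) * g T)"
    by (rule inclusion_exclusion_mobius) (simp_all add: g_eq)
  also have "\<dots> = fsum (\<lambda>J. fsc ((-1) ^ (p - card J)) (fpow (fsum v J) p)) (Pow {0..<p}) u"
  proof -
    have "fpow (fsum v J) p u = g J" if "J \<subseteq> {0..<p}" for J
      unfolding fpow_fsum[OF finite_subset[OF that finite_atLeastLessThan]] by (simp add: fsum_apply g_def c_def)
    then show ?thesis by (simp add: fsum_apply fsc_def)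
  qed
  finally show "Sp p v u = fsum (\<lambda>J. fsc ((-1) ^ (p - card J)) (fpow (fsum v J) p)) (Pow {0..<p}) u" .
qed

text \<open>Closure under products is tracked for finitely supported functions, because
  \<open>fone\<close> does not lie in \<open>FA\<close>.\<close>
definition finsupp :: "'k::field fa \<Rightarrow> bool" where
  "finsupp f \<longleftrightarrow> finite {w. f w \<noteq> 0}"

lemma FA_iff: "f \<in> FA \<longleftrightarrow> finsupp f \<and> f [] = 0"
  by (simp add: FA_def finsupp_def)

lemma finsupp_fmul:
  assumes "finsupp f" "finsupp g" shows "finsupp (fmul f g)"
proof -
  have "{w. fmul f g w \<noteq> 0} \<subseteq> (\<lambda>(a, b). a @ b) ` ({w. f w \<noteq> 0} \<times> {w. g w \<noteq> 0})"
  proof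
    fix w assume "w \<in> {w. fmul f g w \<noteq> 0}"
    then obtain i where "f (take i w) * g (drop i w) \<noteq> 0"
      unfolding fmul_def by (auto elim: sum.not_neutral_contains_not_neutral)
    then show "w \<in> (\<lambda>(a, b). a @ b) ` ({w. f w \<noteq> 0} \<times> {w. g w \<noteq> 0})"
      by (auto intro!: image_eqI[where x="(take i w, drop i w)"])
  qed
  with assms show ?thesis unfolding finsupp_def by (meson finite_SigmaI finite_imageI finite_subset)
qed

lemma fmul_in_FA: "f \<in> FA \<Longrightarrow> finsupp g \<Longrightarrow> fmul f g \<in> FA"
  using finsupp_fmul[of f g] by (simp add: FA_iff fmul_def)

lemma finsupp_fpow: "finsupp v \<Longrightarrow> finsupp (fpow v n)"
proof (induction n)
  case 0
  have "{w. fone w \<noteq> (0::'a)} = {[]}" by (auto simp: fone_def)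
  then show ?case by (simp add: fpow_0 finsupp_def)
qed (simp add: fpow_Suc finsupp_fmul)

lemma fpow_in_FA: "v \<in> FA \<Longrightarrow> n > 0 \<Longrightarrow> fpow v n \<in> FA"
  using fmul_in_FA[of v "fpow v (n - 1)"] finsupp_fpow[of v "n - 1"]
  by (cases n) (auto simp: fpow_Suc FA_iff)

lemma var_in_FA: "var i \<in> FA"
proof -
  have "{w. var i w \<noteq> (0::'a)} = {[i]}" by (auto simp: var_def)
  then show ?thesis by (simp add: FA_def var_def)
qed

lemma tspace_FA: "tspace FA"
proof -
  have "fadd f g \<in> FA" if "f \<in> FA" "g \<in> FA" for f g :: "'a fa"
  proof -
    have "{w. fadd f g w \<noteq> 0} \<subseteq> {w. f w \<noteq> 0} \<union> {w. g w \<noteq> 0}" by (auto simp: fadd_def)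
    with that show ?thesis by (auto simp: FA_def fadd_def intro: finite_subset)
  qed
  moreover have "fsc c f \<in> FA" if "f \<in> FA" for f :: "'a fa" and c
  proof -
    have "{w. fsc c f w \<noteq> 0} \<subseteq> {w. f w \<noteq> 0}" by (auto simp: fsc_def)
    with that show ?thesis by (auto simp: FA_def fsc_def intro: finite_subset)
  qed
  moreover have "fzero \<in> FA" by (simp add: FA_def fzero_def)
  ultimately show ?thesis by (simp add: tspace_def alg_endo_def)
qed

lemma tspace_fsum:
  assumes "tspace T" "finite I" "\<And>i. i \<in> I \<Longrightarrow> F i \<in> T"
  shows "fsum F I \<in> T"
  using assms(2,3)
proof (induction I rule: finite_induct)
  case empty
  then show ?case using assms(1) by (simp add: fsum_def fzero_def[symmetric] tspace_def)
next
  case (insert i I)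
  have "fsum F (insert i I) = fadd (F i) (fsum F I)"
    using insert.hyps by (simp add: fsum_def fadd_def)
  then show ?case using insert assms(1) by (simp add: tspace_def)
qed

lemma fsum_in_FA: "finite I \<Longrightarrow> (\<And>i. i \<in> I \<Longrightarrow> F i \<in> FA) \<Longrightarrow> fsum F I \<in> FA"
  by (rule tspace_fsum[OF tspace_FA])

lemma tgen_least: "tspace T \<Longrightarrow> S \<subseteq> T \<Longrightarrow> tgen S \<subseteq> T"
  by (auto simp: tgen_def)

lemma tgen_upper: "S \<subseteq> tgen S"
  by (auto simp: tgen_def)

lemma tspace_Inter:
  assumes ne: "\<T> \<noteq> {}" and T: "\<And>T. T \<in> \<T> \<Longrightarrow> tspace T"
  shows "tspace (\<Inter>\<T>)"
  unfolding tspace_def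
proof (intro conjI ballI allI impI)
  obtain T0 where "T0 \<in> \<T>" using ne by blast
  then show "\<Inter>\<T> \<subseteq> FA" using T[of T0] unfolding tspace_def by blast
  show "fzero \<in> \<Inter>\<T>" using T by (simp add: tspace_def)
  show "fadd a b \<in> \<Inter>\<T>" if "a \<in> \<Inter>\<T>" "b \<in> \<Inter>\<T>" for a b
    using that T by (simp add: tspace_def)
  show "fsc c a \<in> \<Inter>\<T>" if "a \<in> \<Inter>\<T>" for a c
    using that T by (simp add: tspace_def)
  show "h a \<in> \<Inter>\<T>" if "alg_endo h" "a \<in> \<Inter>\<T>" for h a
    using that T by (simp add: tspace_def)
qed

lemma tspace_tgen: "S \<subseteq> FA \<Longrightarrow> tspace (tgen S)"
  unfolding tgen_def using tspace_FA by (intro tspace_Inter) auto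

section \<open>Substitution endomorphisms\<close>

text \<open>\<open>var_subst R\<close> is the endomorphism \<open>x_i \<mapsto> \<Sum>_{c. R i c} x_c\<close>: the coefficient of a word \<open>u\<close>
  collects the coefficients of all words that are substituted letter by letter into \<open>u\<close>.\<close>
definition var_subst_words :: "(nat \<Rightarrow> nat \<Rightarrow> bool) \<Rightarrow> nat list \<Rightarrow> nat list set" where
  "var_subst_words R u = {w. length w = length u \<and> (\<forall>k<length u. R (w ! k) (u ! k))}"

definition var_subst :: "(nat \<Rightarrow> nat \<Rightarrow> bool) \<Rightarrow> 'k::field fa \<Rightarrow> 'k fa" where
  "var_subst R f = (\<lambda>u. \<Sum>w\<in>var_subst_words R u. f w)"

lemma length_var_subst_words: "w \<in> var_subst_words R u \<Longrightarrow> length w = length u"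
  by (simp add: var_subst_words_def)

lemma var_subst_wordsD: "w \<in> var_subst_words R u \<Longrightarrow> k < length u \<Longrightarrow> R (w ! k) (u ! k)"
  by (simp add: var_subst_words_def)

lemma var_subst_words_Nil: "var_subst_words R [] = {[]}"
  by (auto simp: var_subst_words_def)

lemma var_subst_words_subset_lists:
  "var_subst_words R u \<subseteq> {w. set w \<subseteq> (\<Union>c\<in>set u. {i. R i c}) \<and> length w = length u}"
  by (force simp: var_subst_words_def in_set_conv_nth)

lemma finite_var_subst_words:
  assumes "\<And>c. finite {i. R i c}" shows "finite (var_subst_words R u)"
  using assms by (intro finite_subset[OF var_subst_words_subset_lists] finite_lists_length_eq) auto

lemma bij_betw_var_subst_words_split:
  assumes "m \<le> length u"
  shows "bij_betw (\<lambda>w. (take m w, drop m w)) (var_subst_words R u)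
           (var_subst_words R (take m u) \<times> var_subst_words R (drop m u))"
proof (rule bij_betw_byWitness[where f' = "\<lambda>(a, b). a @ b"])
  show "(\<lambda>(a, b). a @ b) ` (var_subst_words R (take m u) \<times> var_subst_words R (drop m u)) \<subseteq> var_subst_words R u"
  proof clarify
    fix a b assume a: "a \<in> var_subst_words R (take m u)" and b: "b \<in> var_subst_words R (drop m u)"
    have la: "length a = m" using length_var_subst_words[OF a] assms by simp
    have "R ((a @ b) ! k) (u ! k)" if "k < length u" for k
    proof (cases "k < m")
      case True
      have "R (a ! k) (take m u ! k)" using True assms by (intro var_subst_wordsD[OF a]) simp
      then show ?thesis using True la by (simp add: nth_append)
    next
      case False
      have "R (b ! (k - m)) (drop m u ! (k - m))" using False that by (intro var_subst_wordsD[OF b]) simp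
      then show ?thesis using False la assms by (simp add: nth_append)
    qed
    then show "a @ b \<in> var_subst_words R u"
      using length_var_subst_words[OF b] la assms by (simp add: var_subst_words_def)
  qed
qed (use assms in \<open>auto simp: var_subst_words_def\<close>)

lemma var_subst_fmul:
  assumes "\<And>c. finite {i. R i c}"
  shows "var_subst R (fmul f g) = fmul (var_subst R f) (var_subst R g)"
proof (rule ext)
  fix u
  have "var_subst R (fmul f g) u = (\<Sum>i\<le>length u. \<Sum>w\<in>var_subst_words R u. f (take i w) * g (drop i w))"
    unfolding var_subst_def fmul_def
    by (subst sum.swap) (intro sum.cong refl, simp add: var_subst_words_def)
  also have "\<dots> = (\<Sum>i\<le>length u. \<Sum>(a, b)\<in>var_subst_words R (take i u) \<times> var_subst_words R (drop i u). f a * g b)"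
  proof (intro sum.cong refl)
    fix i assume "i \<in> {..length u}"
    then have "bij_betw (\<lambda>w. (take i w, drop i w)) (var_subst_words R u)
        (var_subst_words R (take i u) \<times> var_subst_words R (drop i u))"
      by (intro bij_betw_var_subst_words_split) simp
    from sum.reindex_bij_betw[OF this, where g = "\<lambda>(a, b). f a * g b"]
    show "(\<Sum>w\<in>var_subst_words R u. f (take i w) * g (drop i w))
        = (\<Sum>(a, b)\<in>var_subst_words R (take i u) \<times> var_subst_words R (drop i u). f a * g b)"
      by simp
  qed
  also have "\<dots> = fmul (var_subst R f) (var_subst R g) u"
    unfolding fmul_def var_subst_def
    by (intro sum.cong refl) (simp add: sum_product sum.cartesian_product finite_var_subst_words[OF assms])
  finally show "var_subst R (fmul f g) u = fmul (var_subst R f) (var_subst R g) u" .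
qed

lemma var_subst_fone: "var_subst R fone = fone"
proof (rule ext)
  fix u :: "nat list"
  show "var_subst R fone u = fone u"
  proof (cases "u = []")
    case False
    then have "w \<noteq> []" if "w \<in> var_subst_words R u" for w
      using that by (auto simp: var_subst_words_def)
    with False show ?thesis by (simp add: var_subst_def fone_def)
  qed (simp add: var_subst_def var_subst_words_Nil fone_def)
qed

lemma var_subst_fpow:
  assumes "\<And>c. finite {i. R i c}"
  shows "var_subst R (fpow v n) = fpow (var_subst R v) n"
  by (induction n) (simp_all add: fpow_0 fpow_Suc var_subst_fone var_subst_fmul[OF assms])

lemma var_subst_in_FA:
  assumes fin_pre: "\<And>c. finite {i. R i c}" and fin_img: "\<And>i. finite {c. R i c}"
    and f: "f \<in> FA"
  shows "var_subst R f \<in> FA"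
proof -
  define V where "V w = {u. set u \<subseteq> (\<Union>i\<in>set w. {c. R i c}) \<and> length u = length w}" for w :: "nat list"
  have "{u. var_subst R f u \<noteq> 0} \<subseteq> (\<Union>w\<in>{w. f w \<noteq> 0}. V w)"
  proof
    fix u assume "u \<in> {u. var_subst R f u \<noteq> 0}"
    then obtain w where w: "w \<in> var_subst_words R u" "f w \<noteq> 0"
      unfolding var_subst_def by (auto elim: sum.not_neutral_contains_not_neutral)
    then have "u \<in> V w"
      by (force simp: V_def var_subst_words_def in_set_conv_nth)
    with w show "u \<in> (\<Union>w\<in>{w. f w \<noteq> 0}. V w)" by auto
  qed
  moreover have "finite (V w)" for w
    unfolding V_def using fin_img by (intro finite_lists_length_eq) auto
  then have "finite (\<Union>w\<in>{w. f w \<noteq> 0}. V w)" using f by (auto simp: FA_def)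
  ultimately have "finite {u. var_subst R f u \<noteq> 0}" by (rule finite_subset)
  moreover have "var_subst R f [] = 0" using f by (simp add: var_subst_def var_subst_words_Nil FA_def)
  ultimately show ?thesis by (simp add: FA_def)
qed

lemma alg_endo_var_subst:
  assumes "\<And>c. finite {i. R i c}" "\<And>i. finite {c. R i c}"
  shows "alg_endo (var_subst R :: 'k::field fa \<Rightarrow> 'k fa)"
  unfolding alg_endo_def
  by (auto simp: var_subst_in_FA[OF assms] var_subst_fmul[OF assms(1)])
     (auto simp: var_subst_def fadd_def fsc_def sum.distrib sum_distrib_left fun_eq_iff)

lemma var_subst_var:
  assumes "\<And>c. finite {i. R i c}"
  shows "var_subst R (var i) u = (if length u = 1 \<and> R i (hd u) then 1 else 0)"
proof -
  have "var_subst R (var i) u = (if [i] \<in> var_subst_words R u then 1 else 0)"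
    using finite_var_subst_words[OF assms] by (simp add: var_subst_def var_def sum.delta')
  moreover have "[i] \<in> var_subst_words R u \<longleftrightarrow> length u = 1 \<and> R i (hd u)"
    by (cases u) (auto simp: var_subst_words_def)
  ultimately show ?thesis by simp
qed

text \<open>The substitution \<open>x_1 \<mapsto> \<Sum>_{j \<in> J} x_{j+1}\<close> fixing all other variables.\<close>
definition var1_to_sum :: "nat set \<Rightarrow> nat \<Rightarrow> nat \<Rightarrow> bool" where
  "var1_to_sum J i c \<longleftrightarrow> (i \<noteq> 1 \<and> c = i) \<or> (i = 1 \<and> c \<noteq> 0 \<and> c - 1 \<in> J)"

lemma finite_var1_to_sum_pre: "finite {i. var1_to_sum J i c}"
  by (rule finite_subset[of _ "{c, 1}"]) (auto simp: var1_to_sum_def)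

lemma finite_var1_to_sum_img: "finite J \<Longrightarrow> finite {c. var1_to_sum J i c}"
  by (rule finite_subset[of _ "{i} \<union> Suc ` J"]) (auto simp: var1_to_sum_def image_iff, metis Suc_pred)

lemma var_subst_var1_to_sum:
  assumes "finite J"
  shows "var_subst (var1_to_sum J) (var 1) = (fsum (\<lambda>j. var (Suc j)) J :: 'k::field fa)"
proof (rule ext)
  fix u :: "nat list"
  have "(length u = 1 \<and> var1_to_sum J 1 (hd u)) \<longleftrightarrow> (\<exists>j\<in>J. u = [Suc j])"
    by (cases u; cases "hd u") (auto simp: var1_to_sum_def length_Suc_conv)
  then have "var_subst (var1_to_sum J) (var 1) u = (if \<exists>j\<in>J. u = [Suc j] then 1 else 0 :: 'k)"
    by (simp only: var_subst_var[OF finite_var1_to_sum_pre])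
  also have "\<dots> = (\<Sum>j\<in>J. if u = [Suc j] then 1 else 0)"
    using assms by (auto simp: sum.delta' intro: sum.neutral[symmetric])
  also have "\<dots> = fsum (\<lambda>j. var (Suc j)) J u"
    by (simp add: fsum_apply var_def)
  finally show "var_subst (var1_to_sum J) (var 1) u = (fsum (\<lambda>j. var (Suc j)) J u :: 'k)" .
qed

lemma Sp_vars_in_tspace:
  assumes T: "tspace T" and pow: "fpow (var 1) p \<in> T"
  shows "Sp p (\<lambda>i. var (Suc i)) \<in> (T :: 'k::field fa set)"
proof -
  have "fpow (fsum (\<lambda>i. var (Suc i)) J) p \<in> T" if "J \<subseteq> {0..<p}" for J
  proof -
    have J: "finite J" using that finite_subset by auto
    have "var_subst (var1_to_sum J) (fpow (var 1) p) \<in> T"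
      using T pow alg_endo_var_subst[OF finite_var1_to_sum_pre finite_var1_to_sum_img[OF J]]
      by (auto simp: tspace_def)
    then show ?thesis unfolding var_subst_fpow[OF finite_var1_to_sum_pre] var_subst_var1_to_sum[OF J] .
  qed
  then show ?thesis
    unfolding Sp_polarization using T by (intro tspace_fsum) (auto simp: tspace_def)
qed

lemma fmul_Sp_in_tspace:
  assumes T: "tspace T" and pow: "\<And>w. w \<in> FA \<Longrightarrow> fmul u (fpow w p) \<in> T"
    and v: "\<And>i. i < p \<Longrightarrow> v i \<in> FA"
  shows "fmul u (Sp p v) \<in> (T :: 'k::field fa set)"
proof -
  have "fmul u (fpow (fsum v J) p) \<in> T" if "J \<subseteq> {0..<p}" for J
    using that v by (intro pow fsum_in_FA) (auto intro: finite_subset)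
  then show ?thesis
    unfolding Sp_polarization fmul_fsum_right fmul_fsc_right
    using T by (intro tspace_fsum) (auto simp: tspace_def)
qed

lemma tspace_Lsp:
  assumes "p > 0" shows "tspace (Lsp p (Suc n) :: 'k::field fa set)"
proof (induction n)
  case 0
  show ?case using fpow_in_FA[OF var_in_FA assms] by (auto intro: tspace_tgen)
next
  case (Suc n)
  then have "Lsp p (Suc n) \<subseteq> (FA :: 'k fa set)" by (simp add: tspace_def)
  moreover have "fmul u (fpow v p) \<in> (FA :: 'k fa set)" if "u \<in> Lsp p (Suc n)" "v \<in> FA" for u v
    using that calculation by (meson subsetD fmul_in_FA finsupp_fpow FA_iff)
  ultimately show ?case by (simp only: Lsp.simps) (rule tspace_tgen, auto)
qed

lemma Lsp_Suc_mono: "Lsp p (Suc n) \<subseteq> Lsp p (Suc (Suc n))"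
  by (simp only: Lsp.simps(3)) (meson le_sup_iff tgen_upper)

lemma fmul_fpow_in_Lsp:
  "u \<in> Lsp p (Suc n) \<Longrightarrow> v \<in> FA \<Longrightarrow> fmul u (fpow v p) \<in> Lsp p (Suc (Suc n))"
  by (simp only: Lsp.simps(3)) (rule subsetD[OF tgen_upper], blast)

lemma Rsp_subset_Lsp:
  assumes "p > 0" shows "(Rsp p (Suc n) :: 'k::field fa set) \<subseteq> Lsp p (Suc n)"
proof (induction n)
  case 0
  have "Sp p (\<lambda>i. var (Suc i)) \<in> (Lsp p (Suc 0) :: 'k fa set)"
    using tspace_Lsp[OF assms, of 0] tgen_upper by (intro Sp_vars_in_tspace) auto
  then show ?case
    unfolding Rsp.simps(2) using tspace_Lsp[OF assms, of 0] by (intro tgen_least) auto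
next
  case (Suc n)
  let ?L = "Lsp p (Suc (Suc n)) :: 'k fa set"
  have "fmul u (Sp p v) \<in> ?L" if "u \<in> Rsp p (Suc n)" "\<forall>i<p. v i \<in> FA" for u v
    using that Suc.IH
    by (intro fmul_Sp_in_tspace tspace_Lsp[OF assms] fmul_fpow_in_Lsp) auto
  moreover have "Rsp p (Suc n) \<subseteq> ?L" using Suc.IH Lsp_Suc_mono by blast
  ultimately show ?case
    by (simp only: Rsp.simps(3)) (rule tgen_least[OF tspace_Lsp[OF assms]], blast)
qed

theorem corollary3p1:
  fixes p n :: nat
  assumes "infinite (UNIV :: 'k::field set)"
    and "CHAR('k) = p" and "p > 0"
    and "n \<ge> 1"
  shows "(Rsp p n :: 'k fa set) \<subseteq> Lsp p n"
proof -
  obtain m where "n = Suc m" using assms(4) by (cases n) auto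
  then show ?thesis using Rsp_subset_Lsp[OF assms(3)] by simp
qed

end
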